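(* Let $r,s$ be integers with $r>s>0$ and let $\epsilon\in\{0,1\}$. Let $p_r$ be a real polynomial of degree at most $r$ and $q_{s-1+\epsilon}$ a real polynomial of degree at most $s-1+\epsilon$, and let either $$g(t)=p_r(t^2)+t\,(1-t^2)^{r-s}q_{s-1+\epsilon}(t^2)\quad\text{or}\quad g(t)=p_r(t^2)+t^{-1}(1-t^2)^{r-s}q_{s-1+\epsilon}(t^2).$$ If $g$ vanishes at $r+s+1+\epsilon$ distinct points of $(0,1)$, then $g\equiv0$ on $(0,1)$ (equivalently $p_r\equiv0$ and $q_{s-1+\epsilon}\equiv0$). *)

theory Defs
  imports "HOL-Analysis.Analysis" "HOL-Computational_Algebra.Polynomial"
begin

definition g1 :: "nat \<Rightarrow> nat \<Rightarrow> real poly \<Rightarrow> real poly \<Rightarrow> real \<Rightarrow> real" where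
  "g1 r s p q t = poly p (t^2) + t * (1 - t^2)^(r - s) * poly q (t^2)"

definition g2 :: "nat \<Rightarrow> nat \<Rightarrow> real poly \<Rightarrow> real poly \<Rightarrow> real \<Rightarrow> real" where
  "g2 r s p q t = poly p (t^2) + inverse t * (1 - t^2)^(r - s) * poly q (t^2)"

end

(*
  Substituting u = t^2 turns g into p(u) + u powr a * (1 - u)^m * q(u) with a = 1/2 or -1/2 and
  m = r - s, vanishing at r + s + 1 + epsilon >= r + deg q + 2 points u > 0.  Write
  e(u) = (1 - u)^m q(u), a polynomial of degree at most r.  Differentiating r + 1 times kills p and
  turns u powr a * e(u) into u powr (a - r - 1) * W(u), where the k-th coefficient of W is that of e
  times the falling factorial (a + k)(a + k - 1)...(a + k - r); these factors alternate in sign for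
  k <= r.  By Rolle's theorem W has at least deg q + 1 positive roots, while by Descartes' rule of
  signs it has at most as many as e(-u) = (1 + u)^m q(-u) has sign changes, and multiplying by 1 + u
  creates no sign changes, so at most deg q.  Hence W = 0, so e = 0 and q = 0; finally p, of degree
  at most r, has more than r roots and vanishes too.
*)

theory Submission
  imports Defs
begin

section \<open>Sign changes of coefficient sequences\<close>

fun first_nonzero :: "'a::zero list \<Rightarrow> 'a" where
  "first_nonzero [] = 0"
| "first_nonzero (x # xs) = (if x = 0 then first_nonzero xs else x)"

fun sign_changes :: "'a::linordered_idom list \<Rightarrow> nat" where
  "sign_changes [] = 0"
| "sign_changes (x # xs) = sign_changes xs + (if x * first_nonzero xs < 0 then 1 else 0)"

definition coeff_sign_changes :: "'a::linordered_idom poly \<Rightarrow> nat" where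
  "coeff_sign_changes p = sign_changes (coeffs p)"

lemma first_nonzero_cCons [simp]: "first_nonzero (cCons x xs) = first_nonzero (x # xs)"
  by (simp add: cCons_def)

lemma coeff_sign_changes_pCons [simp]:
  "coeff_sign_changes (pCons a p) =
     coeff_sign_changes p + (if a * first_nonzero (coeffs p) < 0 then 1 else 0)"
  by (simp add: coeff_sign_changes_def cCons_def)

lemma first_nonzero_coeffs_eq_0_iff [simp]: "first_nonzero (coeffs p) = 0 \<longleftrightarrow> p = 0"
  by (induction p rule: pCons_induct) (auto split: if_splits)

lemma coeff_sign_changes_le_degree: "coeff_sign_changes p \<le> degree p"
proof -
  have "sign_changes xs \<le> length xs - 1" for xs :: "'a list"
    by (induction xs rule: induct_list012) auto
  from this[of "coeffs p"] show ?thesis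
    by (cases "p = 0") (auto simp: coeff_sign_changes_def length_coeffs_degree)
qed

lemma sgn_first_nonzero_coeffs_cong:
  fixes p q :: "'a::linordered_idom poly"
  assumes "c \<in> {1, -1}" "\<forall>k. sgn (coeff p k) = c * sgn (coeff q k)"
  shows "sgn (first_nonzero (coeffs p)) = c * sgn (first_nonzero (coeffs q))"
  using assms(2)
proof (induction p arbitrary: q rule: pCons_induct)
  case 0
  then have "q = 0"
    using assms(1) by (auto intro: poly_eqI simp: sgn_0_0)
  then show ?case by simp
next
  case (pCons a p)
  obtain b q' where q: "q = pCons b q'" by (cases q)
  have "sgn a = c * sgn b" "\<forall>k. sgn (coeff p k) = c * sgn (coeff q' k)"
    using pCons.prems[rule_format, of 0] pCons.prems[rule_format, of "Suc _"] q by auto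
  with pCons.IH show ?case
    using assms(1) q by (auto simp: sgn_0_0)
qed

lemma coeff_sign_changes_sgn_cong:
  fixes p q :: "'a::linordered_idom poly"
  assumes "c \<in> {1, -1}" "\<forall>k. sgn (coeff p k) = c * sgn (coeff q k)"
  shows "coeff_sign_changes p = coeff_sign_changes q"
  using assms(2)
proof (induction p arbitrary: q rule: pCons_induct)
  case 0
  then have "q = 0"
    using assms(1) by (auto intro: poly_eqI simp: sgn_0_0)
  then show ?case by simp
next
  case (pCons a p)
  obtain b q' where q: "q = pCons b q'" by (cases q)
  have a: "sgn a = c * sgn b" and p: "\<forall>k. sgn (coeff p k) = c * sgn (coeff q' k)"
    using pCons.prems[rule_format, of 0] pCons.prems[rule_format, of "Suc _"] q by auto
  have "sgn (a * first_nonzero (coeffs p)) = sgn (b * first_nonzero (coeffs q'))"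
    using sgn_first_nonzero_coeffs_cong[OF assms(1) p] a assms(1) by (auto simp: sgn_mult)
  then have "a * first_nonzero (coeffs p) < 0 \<longleftrightarrow> b * first_nonzero (coeffs q') < 0"
    by (metis sgn_less)
  with pCons.IH[OF p] show ?case
    using q by simp
qed

lemma sign_changes_add_first_le:
  "sign_changes (a # (a + x) # xs) \<le> sign_changes (a # x # xs)"
  by (auto simp: mult_less_0_iff split: if_splits)

lemma mult_linear_pCons: "[:c, 1:] * pCons a p = pCons (c * a) ([:a:] + [:c, 1:] * p)"
  for p :: "'a::{idom, ring_char_0} poly"
  by (simp add: poly_eq_poly_eq_iff[symmetric] fun_eq_iff algebra_simps)

lemma first_nonzero_coeffs_mult_linear:
  fixes p :: "'a::linordered_idom poly"
  assumes "c \<noteq> 0"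
  shows "first_nonzero (coeffs ([:c, 1:] * p)) = c * first_nonzero (coeffs p)"
proof (induction p rule: pCons_induct)
  case 0
  then show ?case by simp
next
  case (pCons a p)
  obtain x l where "[:c, 1:] * p = pCons x l"
    by (cases "[:c, 1:] * p")
  with pCons.IH show ?case
    using assms by (simp add: mult_linear_pCons)
qed

lemma coeff_sign_changes_mult_linear_le:
  fixes p :: "'a::linordered_idom poly"
  assumes "0 < c"
  shows "coeff_sign_changes ([:c, 1:] * p) \<le> coeff_sign_changes p"
proof (induction p rule: pCons_induct)
  case 0
  then show ?case by simp
next
  case (pCons a p)
  obtain x l where xl: "[:c, 1:] * p = pCons x l"
    by (cases "[:c, 1:] * p")
  have prod: "[:c, 1:] * pCons a p = pCons (c * a) (pCons (a + x) l)"
    using xl by (simp add: mult_linear_pCons)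
  have "coeff_sign_changes ([:c, 1:] * pCons a p) = sign_changes (a # (a + x) # coeffs l)"
    unfolding prod using assms
    by (simp add: coeff_sign_changes_def cCons_def zero_less_mult_iff mult_less_0_iff)
  also have "\<dots> \<le> sign_changes (a # x # coeffs l)"
    by (rule sign_changes_add_first_le)
  also have "\<dots> = coeff_sign_changes (pCons x l)
      + (if a * first_nonzero (coeffs (pCons x l)) < 0 then 1 else 0)"
    by (simp add: coeff_sign_changes_def cCons_def)
  also have "\<dots> \<le> coeff_sign_changes (pCons a p)"
    using pCons.IH first_nonzero_coeffs_mult_linear[of c p] xl assms
    by (simp add: mult_less_0_iff zero_less_mult_iff)
  finally show ?case .
qed

lemma coeff_sign_changes_mult_linear_power_le:
  fixes p :: "'a::linordered_idom poly"
  assumes "0 < c"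
  shows "coeff_sign_changes ([:c, 1:] ^ m * p) \<le> coeff_sign_changes p"
proof (induction m)
  case 0
  then show ?case by simp
next
  case (Suc m)
  have "coeff_sign_changes ([:c, 1:] ^ Suc m * p) = coeff_sign_changes ([:c, 1:] * ([:c, 1:] ^ m * p))"
    by (simp only: power_Suc mult.assoc)
  also have "\<dots> \<le> coeff_sign_changes ([:c, 1:] ^ m * p)"
    by (rule coeff_sign_changes_mult_linear_le[OF assms])
  finally show ?case
    using Suc.IH by linarith
qed

lemma sgn_coeff_pderiv_pCons: "sgn (coeff (pderiv (pCons a p)) k) = sgn (coeff p k)"
  for p :: "'a::linordered_idom poly"
  by (simp add: coeff_pderiv sgn_mult del: of_nat_Suc)

lemma coeff_sign_changes_pderiv_pCons:
  "coeff_sign_changes (pderiv (pCons a p)) = coeff_sign_changes p"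
  for p :: "'a::linordered_idom poly"
  by (rule coeff_sign_changes_sgn_cong[of 1]) (simp_all add: sgn_coeff_pderiv_pCons)

lemma sgn_first_nonzero_coeffs_pderiv_pCons:
  "sgn (first_nonzero (coeffs (pderiv (pCons a p)))) = sgn (first_nonzero (coeffs p))"
  for p :: "'a::linordered_idom poly"
  using sgn_first_nonzero_coeffs_cong[of 1 "pderiv (pCons a p)" p]
  by (simp add: sgn_coeff_pderiv_pCons)

section \<open>Rolle's theorem and Descartes' rule of signs\<close>

lemma card_zeros_le_Suc_card_deriv_zeros:
  fixes f f' :: "real \<Rightarrow> real"
  assumes "finite S" "S \<noteq> {}" "\<forall>x\<in>S. f x = 0"
    and "\<And>x. Min S \<le> x \<Longrightarrow> x \<le> Max S \<Longrightarrow> (f has_real_derivative f' x) (at x)"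
  shows "\<exists>T. finite T \<and> card S \<le> Suc (card T) \<and> T \<subseteq> {Min S<..<Max S} \<and> (\<forall>x\<in>T. f' x = 0)"
  using assms
proof (induction S rule: finite_linorder_max_induct)
  case empty
  then show ?case by simp
next
  case (insert b A)
  show ?case
  proof (cases "A = {}")
    case True
    then show ?thesis by auto
  next
    case False
    have bounds: "Max A < b" "Min A < b" "Min A \<le> Max A"
      using insert.hyps False by simp_all
    then have minmax: "Min (insert b A) = Min A" "Max (insert b A) = b"
      using insert.hyps(1) False by (simp_all add: min.absorb2 max.absorb1)
    obtain T where T: "finite T" "card A \<le> Suc (card T)" "T \<subseteq> {Min A<..<Max A}"
        "\<forall>x\<in>T. f' x = 0"
      using insert minmax bounds False by (metis insert_iff order.trans less_imp_le)
    have deriv: "(f has_real_derivative f' x) (at x)" if "Max A \<le> x" "x \<le> b" for x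
      using insert.prems(3) minmax bounds that by simp
    obtain z where z: "Max A < z" "z < b" "(f has_real_derivative 0) (at z)"
    proof -
      have "\<exists>z>Max A. z < b \<and> (f has_real_derivative 0) (at z)"
      proof (rule Rolle[OF bounds(1)])
        show "f (Max A) = f b"
          using insert.prems(2) False insert.hyps(1) by simp
        show "continuous_on {Max A..b} f"
          using deriv by (meson DERIV_isCont atLeastAtMost_iff continuous_at_imp_continuous_on)
        show "f differentiable at x" if "Max A < x" "x < b" for x
          using deriv that real_differentiable_def by (meson less_imp_le)
      qed
      then show ?thesis using that by blast
    qed
    have "f' z = 0"
      using DERIV_unique[OF deriv z(3)] z by simp
    moreover have "z \<notin> T"
      using T(3) z(1) by auto
    ultimately show ?thesis
      using T z minmax bounds insert.hyps by (intro exI[of _ "insert z T"]) auto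
  qed
qed

lemma card_zeros_le_card_iterated_deriv_zeros:
  fixes F :: "nat \<Rightarrow> real \<Rightarrow> real"
  assumes "is_interval I" "\<And>n u. u \<in> I \<Longrightarrow> (F n has_real_derivative F (Suc n) u) (at u)"
    and "finite S" "S \<subseteq> I" "\<forall>x\<in>S. F 0 x = 0"
  shows "\<exists>T. finite T \<and> T \<subseteq> I \<and> card S \<le> card T + n \<and> (\<forall>x\<in>T. F n x = 0)"
proof (induction n)
  case 0
  show ?case
    using assms(3-5) by (intro exI[of _ S]) simp
next
  case (Suc n)
  then obtain T where T: "finite T" "T \<subseteq> I" "card S \<le> card T + n" "\<forall>x\<in>T. F n x = 0"
    by blast
  show ?case
  proof (cases "T = {}")
    case True
    then show ?thesis
      using T by (intro exI[of _ "{}"]) auto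
  next
    case False
    have "Min T \<in> I" "Max T \<in> I"
      using T(1,2) False by (meson Min_in Max_in subsetD)+
    have "{Min T..Max T} \<subseteq> I"
    proof
      fix x
      assume "x \<in> {Min T..Max T}"
      then show "x \<in> I"
        using mem_is_interval_1_I[OF assms(1) \<open>Min T \<in> I\<close> \<open>Max T \<in> I\<close>] by simp
    qed
    then have "(F n has_real_derivative F (Suc n) x) (at x)" if "Min T \<le> x" "x \<le> Max T" for x
      using assms(2) that by auto
    then obtain T' where "finite T'" "card T \<le> Suc (card T')" "T' \<subseteq> {Min T<..<Max T}"
        "\<forall>x\<in>T'. F (Suc n) x = 0"
      using card_zeros_le_Suc_card_deriv_zeros[OF T(1) False T(4)] by blast
    moreover have "{Min T<..<Max T} \<subseteq> I"
      using \<open>{Min T..Max T} \<subseteq> I\<close> by auto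
    ultimately show ?thesis
      using T(3) by (intro exI[of _ T']) auto
  qed
qed

lemma eventually_sgn_poly_at_right_0:
  fixes p :: "real poly"
  shows "eventually (\<lambda>u. sgn (poly p u) = sgn (first_nonzero (coeffs p))) (at_right 0)"
proof (induction p rule: pCons_induct)
  case 0
  then show ?case by simp
next
  case (pCons a p)
  show ?case
  proof (cases "a = 0")
    case True
    from pCons.IH eventually_at_right_less[of 0] show ?thesis
      by eventually_elim (simp add: True sgn_mult)
  next
    case False
    have "(poly (pCons a p) \<longlongrightarrow> poly (pCons a p) 0) (at_right 0)"
      using poly_isCont[of 0 "pCons a p"] unfolding isCont_def
      by (rule tendsto_mono[rotated]) (simp add: at_le)
    then have lim: "(poly (pCons a p) \<longlongrightarrow> a) (at_right 0)"
      by simp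
    show ?thesis
    proof (cases "0 < a")
      case True
      from order_tendstoD(1)[OF lim True] show ?thesis
        by eventually_elim (use True in simp)
    next
      case nonpos: False
      with \<open>a \<noteq> 0\<close> have "a < 0" by simp
      from order_tendstoD(2)[OF lim this] show ?thesis
        by eventually_elim (use \<open>a < 0\<close> in simp)
    qed
  qed
qed

lemma pderiv_root_between_0_and_root:
  fixes p :: "real poly"
  assumes "0 < a * first_nonzero (coeffs p)" "0 < z" "poly (pCons a p) z = 0"
  shows "\<exists>w>0. w < z \<and> poly (pderiv (pCons a p)) w = 0"
proof -
  define d where "d = pderiv (pCons a p)"
  have "sgn (first_nonzero (coeffs d)) = sgn a"
    using sgn_first_nonzero_coeffs_pderiv_pCons[of a p] assms(1)
    by (auto simp: d_def zero_less_mult_iff)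
  with eventually_sgn_poly_at_right_0[of d] obtain b where b: "0 < b"
      "\<And>u. 0 < u \<Longrightarrow> u < b \<Longrightarrow> sgn (poly d u) = sgn a"
    unfolding eventually_at_right_field by auto
  obtain x where x: "0 < x" "x < z" "poly (pCons a p) z - poly (pCons a p) 0 = z * poly d x"
    using poly_MVT[OF assms(2), of "pCons a p"] unfolding d_def diff_0_right by blast
  then have "z * poly d x = - a"
    using assms(3) by simp
  then have "sgn z * sgn (poly d x) = - sgn a"
    by (metis sgn_minus sgn_mult)
  then have "sgn (poly d x) = - sgn a"
    using assms(2) by simp
  define u where "u = min (b / 2) (x / 2)"
  have u: "0 < u" "u < b" "u < x"
    using b(1) x(1) by (auto simp: u_def)
  have "sgn (poly d u * poly d x) = - (sgn a * sgn a)"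
    using b(2)[OF u(1,2)] \<open>sgn (poly d x) = - sgn a\<close> by (simp add: sgn_mult)
  then have "sgn (poly d u * poly d x) < 0"
    using assms(1) by auto
  then have "poly d u * poly d x < 0"
    by simp
  then obtain w where "u < w" "w < x" "poly d w = 0"
    using poly_IVT[OF u(3)] by blast
  then show ?thesis
    using x u d_def by (intro exI[of _ w]) auto
qed

theorem card_pos_roots_le_coeff_sign_changes:
  fixes p :: "real poly"
  assumes "p \<noteq> 0" "finite S" "S \<subseteq> {0<..}" "\<forall>x\<in>S. poly p x = 0"
  shows "card S \<le> coeff_sign_changes p"
  using assms
proof (induction "degree p" arbitrary: p S rule: less_induct)
  case less
  obtain a p' where p: "p = pCons a p'"
    by (cases p)
  show ?case
  proof (cases "a = 0 \<or> S = {}")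
    case True
    then show ?thesis
      using less.hyps[of p' S] less.prems p by (fastforce simp: subset_eq)
  next
    case False
    then have "p' \<noteq> 0" "a \<noteq> 0" "S \<noteq> {}"
      using less.prems p by auto
    define d where "d = pderiv p"
    have deriv: "\<And>x. (poly p has_real_derivative poly d x) (at x)"
      by (simp add: d_def)
    obtain T where T: "finite T" "card S \<le> Suc (card T)" "T \<subseteq> {Min S<..<Max S}"
        "\<forall>x\<in>T. poly d x = 0"
      using card_zeros_le_Suc_card_deriv_zeros[OF less.prems(2) \<open>S \<noteq> {}\<close> less.prems(4) deriv]
      by blast
    have "0 < Min S"
      using less.prems \<open>S \<noteq> {}\<close> by auto
    have d: "degree d < degree p" "d \<noteq> 0"
      using p \<open>p' \<noteq> 0\<close> by (auto simp: d_def degree_pderiv pderiv_eq_0_iff)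
    have Vd: "coeff_sign_changes d = coeff_sign_changes p'"
      by (simp add: d_def p coeff_sign_changes_pderiv_pCons)
    txt \<open>Rolle loses one root.  It is paid for either by the sign change between \<open>a\<close> and the
      lowest nonzero coefficient of \<open>p'\<close> or, if there is none, by a root of \<open>d\<close> in
      \<open>(0, Min S)\<close>.\<close>
    show ?thesis
    proof (cases "a * first_nonzero (coeffs p') < 0")
      case True
      have "card T \<le> coeff_sign_changes d"
        using less.hyps[OF d T(1)] T(3,4) \<open>0 < Min S\<close> by force
      then show ?thesis
        using T(2) Vd p True by simp
    next
      case False
      then have "0 < a * first_nonzero (coeffs p')"
        using \<open>a \<noteq> 0\<close> \<open>p' \<noteq> 0\<close> by (simp add: not_less order.order_iff_strict)
      then obtain w where w: "0 < w" "w < Min S" "poly d w = 0"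
        using pderiv_root_between_0_and_root[of a p' "Min S"] less.prems \<open>0 < Min S\<close>
          \<open>S \<noteq> {}\<close> p d_def by auto
      then have "w \<notin> T"
        using T(3) by auto
      have "card (insert w T) \<le> coeff_sign_changes d"
        using less.hyps[OF d, of "insert w T"] T w \<open>0 < Min S\<close> by force
      then show ?thesis
        using T(1,2) \<open>w \<notin> T\<close> Vd p by simp
    qed
  qed
qed

section \<open>Higher derivatives of a power times a polynomial\<close>

definition falling_factorial :: "real \<Rightarrow> nat \<Rightarrow> real" where
  "falling_factorial x n = (\<Prod>i<n. x - real i)"

lemma falling_factorial_0 [simp]: "falling_factorial x 0 = 1"
  by (simp add: falling_factorial_def)

lemma falling_factorial_Suc: "falling_factorial x (Suc n) = falling_factorial x n * (x - real n)"
  by (simp add: falling_factorial_def)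

lemma falling_factorial_Suc_shift:
  "falling_factorial (x + 1) (Suc n) * (x - real n) = falling_factorial x (Suc n) * (x + 1)"
proof -
  have "falling_factorial (x + 1) (Suc n) = (x + 1) * falling_factorial x n"
    unfolding falling_factorial_def by (subst prod.lessThan_Suc_shift) simp
  then show ?thesis
    by (simp add: falling_factorial_Suc)
qed

lemma falling_factorial_nonzero:
  assumes "x \<notin> \<int>"
  shows "falling_factorial x n \<noteq> 0"
proof -
  have "x - real i \<noteq> 0" for i
    using assms by (auto simp: Ints_of_nat)
  then show ?thesis
    by (simp add: falling_factorial_def)
qed

lemma sgn_falling_factorial_add_nat:
  assumes "\<bar>a\<bar> < 1" "k \<le> n"
  shows "sgn (falling_factorial (a + real k) (Suc n)) = (-1) ^ k * sgn (falling_factorial a (Suc n))"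
  using assms(2)
proof (induction k)
  case 0
  then show ?case by simp
next
  case (Suc k)
  have "falling_factorial (a + real (Suc k)) (Suc n) * (a + real k - real n)
      = falling_factorial (a + real k) (Suc n) * (a + real k + 1)"
    using falling_factorial_Suc_shift[of "a + real k" n] by (simp add: ac_simps)
  then have "sgn (falling_factorial (a + real (Suc k)) (Suc n)) * sgn (a + real k - real n)
      = sgn (falling_factorial (a + real k) (Suc n)) * sgn (a + real k + 1)"
    by (metis sgn_mult)
  moreover have "a + real k - real n < 0" "0 < a + real k + 1"
    using Suc.prems assms(1) by (auto simp: abs_less_iff)
  ultimately show ?case
    using Suc by simp
qed

text \<open>For \<open>u > 0\<close>, the \<open>n\<close>-th derivative of \<open>u powr a * poly p u\<close> is
  \<open>u powr (a - n) * poly (powr_deriv_poly a n p) u\<close>.\<close>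

definition powr_deriv_poly :: "real \<Rightarrow> nat \<Rightarrow> real poly \<Rightarrow> real poly" where
  "powr_deriv_poly a n p = (\<Sum>k\<le>degree p. monom (coeff p k * falling_factorial (a + real k) n) k)"

lemma coeff_powr_deriv_poly:
  "coeff (powr_deriv_poly a n p) k = coeff p k * falling_factorial (a + real k) n"
  by (auto simp: powr_deriv_poly_def coeff_sum coeff_eq_0)

lemma powr_deriv_poly_0 [simp]: "powr_deriv_poly a 0 p = p"
  by (rule poly_eqI) (simp add: coeff_powr_deriv_poly)

lemma powr_deriv_poly_eq_0_iff:
  assumes "a \<notin> \<int>"
  shows "powr_deriv_poly a n p = 0 \<longleftrightarrow> p = 0"
proof -
  have "a + real k \<notin> \<int>" for k
    using assms by (metis Ints_diff Ints_of_nat add_diff_cancel_right')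
  then show ?thesis
    by (auto simp: poly_eq_iff coeff_powr_deriv_poly falling_factorial_nonzero)
qed

lemma powr_mult_powr_deriv_poly_eq_sum:
  assumes "0 < u"
  shows "u powr (a - real n) * poly (powr_deriv_poly a n p) u
    = (\<Sum>k\<le>degree p. coeff p k * falling_factorial (a + real k) n * u powr (a + real k - real n))"
  unfolding powr_deriv_poly_def poly_sum poly_monom sum_distrib_left
proof (rule sum.cong)
  fix k
  have "u powr (a + real k - real n) = u powr (a - real n) * u ^ k"
    using assms by (simp add: powr_add[symmetric] powr_realpow[symmetric] algebra_simps)
  then show "u powr (a - real n) * (coeff p k * falling_factorial (a + real k) n * u ^ k)
      = coeff p k * falling_factorial (a + real k) n * u powr (a + real k - real n)"
    by simp
qed simp

lemma has_real_derivative_powr_mult_powr_deriv_poly: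
  assumes "0 < u"
  shows "((\<lambda>u. u powr (a - real n) * poly (powr_deriv_poly a n p) u) has_real_derivative
      u powr (a - real (Suc n)) * poly (powr_deriv_poly a (Suc n) p) u) (at u)"
proof (rule has_field_derivative_transform_within_open[where S = "{0<..}"])
  have "((\<lambda>u. coeff p k * falling_factorial (a + real k) n * u powr (a + real k - real n))
      has_real_derivative coeff p k * falling_factorial (a + real k) (Suc n)
        * u powr (a + real k - real (Suc n))) (at u)" for k
    using assms
    by (auto intro!: derivative_eq_intros simp: falling_factorial_Suc algebra_simps)
  then show "((\<lambda>u. \<Sum>k\<le>degree p. coeff p k * falling_factorial (a + real k) n
      * u powr (a + real k - real n)) has_real_derivative
      u powr (a - real (Suc n)) * poly (powr_deriv_poly a (Suc n) p) u) (at u)"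
    unfolding powr_mult_powr_deriv_poly_eq_sum[OF assms] by (intro DERIV_sum)
qed (use assms powr_mult_powr_deriv_poly_eq_sum in auto)

lemma card_zeros_le_card_powr_deriv_poly_roots:
  fixes p e :: "real poly"
  assumes "degree p < n" "finite S" "S \<subseteq> {0<..}" "\<forall>u\<in>S. poly p u + u powr a * poly e u = 0"
  shows "\<exists>T. finite T \<and> T \<subseteq> {0<..} \<and> card S \<le> card T + n
    \<and> (\<forall>x\<in>T. poly (powr_deriv_poly a n e) x = 0)"
proof -
  define F where "F k u = poly ((pderiv ^^ k) p) u
    + u powr (a - real k) * poly (powr_deriv_poly a k e) u" for k u
  have "(F k has_real_derivative F (Suc k) u) (at u)" if "u \<in> {0<..}" for k u
    unfolding F_def funpow.simps(2) o_apply using that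
    by (intro DERIV_add poly_DERIV has_real_derivative_powr_mult_powr_deriv_poly) simp
  moreover have "is_interval {0::real<..}"
    by (auto simp: is_interval_1)
  moreover have "\<forall>x\<in>S. F 0 x = 0"
    using assms(4) by (simp add: F_def)
  ultimately obtain T where T: "finite T" "T \<subseteq> {0<..}" "card S \<le> card T + n" "\<forall>x\<in>T. F n x = 0"
    using card_zeros_le_card_iterated_deriv_zeros[of "{0<..}" F S n] assms(2,3) by blast
  have "(pderiv ^^ n) p = 0"
    using assms(1) by (intro poly_eqI) (simp add: coeff_higher_pderiv coeff_eq_0)
  then show ?thesis
    using T by (intro exI[of _ T]) (auto simp: F_def)
qed

lemma coeff_sign_changes_powr_deriv_poly:
  assumes "a \<notin> \<int>" "\<bar>a\<bar> < 1" "degree p \<le> r"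
  shows "coeff_sign_changes (powr_deriv_poly a (Suc r) p) = coeff_sign_changes (p \<circ>\<^sub>p [:0, -1:])"
proof (rule coeff_sign_changes_sgn_cong)
  show "sgn (falling_factorial a (Suc r)) \<in> {1, -1}"
    using falling_factorial_nonzero[OF assms(1)] by (auto simp: sgn_if)
  show "\<forall>k. sgn (coeff (powr_deriv_poly a (Suc r) p) k)
    = sgn (falling_factorial a (Suc r)) * sgn (coeff (p \<circ>\<^sub>p [:0, -1:]) k)"
  proof
    fix k
    show "sgn (coeff (powr_deriv_poly a (Suc r) p) k)
      = sgn (falling_factorial a (Suc r)) * sgn (coeff (p \<circ>\<^sub>p [:0, -1:]) k)"
    proof (cases "k \<le> r")
      case True
      then show ?thesis
        using sgn_falling_factorial_add_nat[of a k r] assms(2)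
        by (simp add: coeff_powr_deriv_poly coeff_pcompose_linear sgn_mult)
    next
      case False
      then show ?thesis
        using assms(3) by (simp add: coeff_powr_deriv_poly coeff_pcompose_linear coeff_eq_0)
    qed
  qed
qed

section \<open>Zeros of a polynomial plus a power times a polynomial\<close>

theorem card_zeros_poly_plus_powr_mult_poly_le_sign_changes:
  fixes p e :: "real poly"
  assumes "a \<notin> \<int>" "\<bar>a\<bar> < 1" "degree p \<le> r" "degree e \<le> r" "e \<noteq> 0"
    and "finite S" "S \<subseteq> {0<..}" "\<forall>u\<in>S. poly p u + u powr a * poly e u = 0"
  shows "card S \<le> r + 1 + coeff_sign_changes (e \<circ>\<^sub>p [:0, -1:])"
proof -
  obtain T where T: "finite T" "T \<subseteq> {0<..}" "card S \<le> card T + Suc r"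
      "\<forall>x\<in>T. poly (powr_deriv_poly a (Suc r) e) x = 0"
    using card_zeros_le_card_powr_deriv_poly_roots[of p "Suc r" S a e] assms(3,6-8) by auto
  have "powr_deriv_poly a (Suc r) e \<noteq> 0"
    using assms(1,5) by (simp add: powr_deriv_poly_eq_0_iff)
  then have "card T \<le> coeff_sign_changes (powr_deriv_poly a (Suc r) e)"
    using card_pos_roots_le_coeff_sign_changes T(1,2,4) by blast
  then show ?thesis
    using T(3) coeff_sign_changes_powr_deriv_poly[OF assms(1,2,4)] by simp
qed

theorem poly_plus_powr_mult_poly_eq_0_if_card_zeros:
  fixes p q :: "real poly"
  assumes "a \<notin> \<int>" "\<bar>a\<bar> < 1" "degree p \<le> r" "m + degree q \<le> r"
    and "finite S" "S \<subseteq> {0<..}" "r + degree q + 2 \<le> card S"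
    and "\<forall>u\<in>S. poly p u + u powr a * (1 - u) ^ m * poly q u = 0"
  shows "p = 0 \<and> q = 0"
proof -
  define e where "e = [:1, -1:] ^ m * q"
  have "degree ([:1, -1:] ^ m :: real poly) \<le> m"
    using degree_power_le[of "[:1, -1:] :: real poly" m] by simp
  then have "degree e \<le> r"
    using degree_mult_le[of "[:1, -1:] ^ m" q] assms(4) unfolding e_def by linarith
  have zeros: "\<forall>u\<in>S. poly p u + u powr a * poly e u = 0"
    using assms(8) by (simp add: e_def poly_power mult.assoc)
  have "e = 0"
  proof (rule ccontr)
    assume "e \<noteq> 0"
    have "poly (e \<circ>\<^sub>p [:0, -1:]) = poly ([:1, 1:] ^ m * (q \<circ>\<^sub>p [:0, -1:]))"
      by (simp add: fun_eq_iff e_def poly_pcompose poly_power)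
    then have "coeff_sign_changes (e \<circ>\<^sub>p [:0, -1:]) \<le> coeff_sign_changes (q \<circ>\<^sub>p [:0, -1:])"
      using coeff_sign_changes_mult_linear_power_le[of 1 m] by (simp add: poly_eq_poly_eq_iff)
    also have "\<dots> \<le> degree q"
      using coeff_sign_changes_le_degree[of "q \<circ>\<^sub>p [:0, -1:]"] by (simp add: degree_pcompose)
    finally show False
      using card_zeros_poly_plus_powr_mult_poly_le_sign_changes[OF assms(1-3) \<open>degree e \<le> r\<close>
          \<open>e \<noteq> 0\<close> assms(5,6) zeros] assms(7)
      by linarith
  qed
  then have "q = 0"
    by (simp add: e_def)
  moreover have "p = 0"
  proof (rule ccontr)
    assume "p \<noteq> 0"
    have "card S \<le> card {x. poly p x = 0}"
      using assms(8) \<open>q = 0\<close> poly_roots_finite[OF \<open>p \<noteq> 0\<close>] by (intro card_mono) auto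
    also have "\<dots> \<le> degree p"
      using card_poly_roots_bound[OF \<open>p \<noteq> 0\<close>] .
    finally show False
      using assms(3,7) by linarith
  qed
  ultimately show ?thesis
    by simp
qed

section \<open>The substitution \<open>u = t\<^sup>2\<close>\<close>

lemma half_not_in_Ints: "(1 / 2 :: real) \<notin> \<int>" "(- 1 / 2 :: real) \<notin> \<int>"
  using fraction_not_in_Ints[of 2 1, where 'a = real]
    fraction_not_in_Ints[of 2 "- 1", where 'a = real]
  by simp_all

lemma g1_or_g2_eq_powr:
  assumes "g = g1 r s p q \<or> g = g2 r s p q"
  obtains a :: real where "a \<notin> \<int>" "\<bar>a\<bar> < 1"
    "\<And>t. 0 < t \<Longrightarrow>
      g t = poly p (t\<^sup>2) + (t\<^sup>2) powr a * (1 - t\<^sup>2) ^ (r - s) * poly q (t\<^sup>2)"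
proof -
  have "(t\<^sup>2) powr (1 / 2) = t" "(t\<^sup>2) powr (- 1 / 2) = inverse t" if "0 < t" for t :: real
    using that by (simp_all add: powr_half_sqrt powr_minus_divide inverse_eq_divide)
  then show ?thesis
    using assms half_not_in_Ints that[of "1 / 2"] that[of "- 1 / 2"] by (auto simp: g1_def g2_def)
qed

lemma card_image_power2:
  assumes "Z \<subseteq> {0..}"
  shows "card ((\<lambda>t::real. t\<^sup>2) ` Z) = card Z"
proof (rule card_image)
  show "inj_on (\<lambda>t::real. t\<^sup>2) Z"
    using assms by (intro inj_onI) (metis atLeast_iff power2_eq_iff_nonneg subsetD)
qed

theorem proposition2p4:
  fixes r s \<epsilon> :: nat and p q :: "real poly" and g :: "real \<Rightarrow> real" and Z :: "real set"
  assumes "0 < s" and "s < r" and "\<epsilon> \<in> {0, 1}"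
    and "degree p \<le> r" and "degree q \<le> s - 1 + \<epsilon>"
    and "g = g1 r s p q \<or> g = g2 r s p q"
    and "Z \<subseteq> {0<..<1}" and "finite Z" and "card Z = r + s + 1 + \<epsilon>"
    and "\<forall>t\<in>Z. g t = 0"
  shows "(\<forall>t\<in>{0<..<1}. g t = 0) \<and> p = 0 \<and> q = 0"
proof -
  obtain a where a: "a \<notin> \<int>" "\<bar>a\<bar> < 1" and g: "\<And>t. 0 < t \<Longrightarrow>
      g t = poly p (t\<^sup>2) + (t\<^sup>2) powr a * (1 - t\<^sup>2) ^ (r - s) * poly q (t\<^sup>2)"
    using g1_or_g2_eq_powr[OF assms(6)] by blast
  define S where "S = (\<lambda>t. t\<^sup>2) ` Z"
  have "Z \<subseteq> {0..}"
    using assms(7) by auto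
  then have S: "finite S" "S \<subseteq> {0<..}" "card S = card Z"
    using assms(7,8) card_image_power2 by (auto simp: S_def)
  have "poly p (t\<^sup>2) + (t\<^sup>2) powr a * (1 - t\<^sup>2) ^ (r - s) * poly q (t\<^sup>2) = 0" if "t \<in> Z" for t
    using g[of t] assms(7,10) that by auto
  then have zeros: "\<forall>u\<in>S. poly p u + u powr a * (1 - u) ^ (r - s) * poly q u = 0"
    by (auto simp: S_def)
  have "p = 0 \<and> q = 0"
    using poly_plus_powr_mult_poly_eq_0_if_card_zeros[OF a assms(4) _ S(1,2) _ zeros]
      assms(1-3,5,9) S(3) by auto
  then show ?thesis
    using assms(6) by (auto simp: g1_def g2_def)
qed

end
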